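(* There is an absolute constant $C\ge1$ such that for every $n\ge3$ and every $\vec a=a_1\cdots a_n\in\mathbb N^n$ (writing $X\sim Y$ for $C^{-1}Y\le X\le CY$): (1) $\#\Xi(\mathbf1,\vec a)\sim q_n(\vec a)/a_1$; (2) $\#\Xi(\mathbf2,\vec a)\sim q_n(\vec a)$; (3) $\#\Xi(\mathbf3,\vec a)\sim q_n(\vec a)$ if $a_1\ge2$; (4) $\#\Xi(\mathbf3,\vec a)\sim q_n(\vec a)/a_2$ if $a_1=1$; (5) $\#\Xi(\mathbf t,\vec a,\mathbf2)+\#\Xi(\mathbf t,\vec a,\mathbf3)\sim\#\Xi(\mathbf t,\vec a)$ for every $\mathbf t\in\{\mathbf1,\mathbf2,\mathbf3\}$; (6) $\#\Xi(\mathbf2,\vec a,\mathbf1)\sim q_n(\vec a)$.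
   Context: $q_n(\vec a)$ is defined by $q_{-1}=0$, $q_0=1$, $q_{k+1}=a_{k+1}q_k+q_{k-1}$. For $m\ge1$ let $\mathcal A_m=\{(\mathbf1,k)_m:1\le k\le m+1\}\cup\{(\mathbf2,1)_m\}\cup\{(\mathbf3,k)_m:1\le k\le m\}$, type $\mathbf t_{(\mathbf t,k)_m}=\mathbf t$. For $\mathbf t\in\{\mathbf1,\mathbf2,\mathbf3\}$, $\hat e\in\mathcal A_m$: $\mathbf t\to\hat e$ iff $(\mathbf t,\hat e)$ is $(\mathbf1,(\mathbf2,1)_m)$, $(\mathbf2,(\mathbf1,k)_m)$ with $k\le m+1$, $(\mathbf2,(\mathbf3,k)_m)$ with $k\le m$, $(\mathbf3,(\mathbf1,k)_m)$ with $k\le m$, or $(\mathbf3,(\mathbf3,k)_m)$ with $k\le m-1$; $e\to\hat e$ iff $\mathbf t_e\to\hat e$. $\Xi(\mathbf t,\vec a)$ is the set of words $w_1\cdots w_n\in\prod_{j=1}^n\mathcal A_{a_j}$ with $\mathbf t\to w_1$ and $w_j\to w_{j+1}$ ($1\le j<n$); $\Xi(\mathbf t,\vec a,\mathbf t')=\{w\in\Xi(\mathbf t,\vec a):\mathbf t_{w_n}=\mathbf t'\}$. *)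

theory Defs
  imports Complex_Main
begin

datatype ltype = T1 | T2 | T3

text \<open>A letter (t,k)_m is represented by the pair (t,k); the index m is
  determined by the position in the word.\<close>
type_synonym letter = "ltype \<times> nat"

definition alph :: "nat \<Rightarrow> letter set" where
  "alph m = {(T1,k) | k. 1 \<le> k \<and> k \<le> m + 1} \<union> {(T2,1)} \<union> {(T3,k) | k. 1 \<le> k \<and> k \<le> m}"

fun arrow :: "nat \<Rightarrow> ltype \<Rightarrow> letter \<Rightarrow> bool" where
  "arrow m T1 e = (e = (T2,1))"
| "arrow m T2 e = ((fst e = T1 \<and> snd e \<le> m + 1) \<or> (fst e = T3 \<and> snd e \<le> m))"
| "arrow m T3 e = ((fst e = T1 \<and> snd e \<le> m) \<or> (fst e = T3 \<and> snd e \<le> m - 1))"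

text \<open>Indices shifted: a ! j is a_{j+1}, w ! j is w_{j+1}.\<close>
definition Xi :: "ltype \<Rightarrow> nat list \<Rightarrow> letter list set" where
  "Xi t a = {w. length w = length a \<and> (\<forall>j < length a. w ! j \<in> alph (a ! j))
      \<and> arrow (a ! 0) t (w ! 0)
      \<and> (\<forall>j. j + 1 < length a \<longrightarrow> arrow (a ! (j+1)) (fst (w ! j)) (w ! (j+1)))}"

definition Xi_end :: "ltype \<Rightarrow> nat list \<Rightarrow> ltype \<Rightarrow> letter list set" where
  "Xi_end t a t' = {w \<in> Xi t a. fst (w ! (length a - 1)) = t'}"

text \<open>Continuant: q_{-1}=0, q_0=1, q_{k+1}=a_{k+1} q_k + q_{k-1}; qn a = q_n(a).\<close>
definition qn :: "nat list \<Rightarrow> nat" where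
  "qn a = snd (foldl (\<lambda>(p, q) x. (q, x * q + p)) (0, 1) a)"

definition sim :: "real \<Rightarrow> real \<Rightarrow> real \<Rightarrow> bool" where
  "sim C X Y \<longleftrightarrow> Y / C \<le> X \<and> X \<le> C * Y"

end

theory Submission
  imports Defs
begin

text \<open>For each m let M_m be the 3x3 matrix whose (t, s) entry counts the letters of type s
  in A_m that may follow type t. Counting the words of Xi(t, a) with weight v(s) for the type s
  of their last letter gives the t-entry of M_{a_1} ... M_{a_n} v. When v(2) = v(3), the 2-entry
  and the sum of the 1- and 3-entries satisfy the continuant recursion, which yields exact counts
  such as #Xi(1,a) + #Xi(3,a) = 2 q_n(a) and #Xi(2,a) = 2 q_n(a) - (-1)^n. A letter of type 1
  is always followed by (2,1), so counts starting at type 1 are counts for a_2 ... a_n starting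
  at type 2. All six estimates then hold with C = 3, by
  q_n(a) = a_1 q(a_2 ... a_n) + q(a_3 ... a_n) and q(a_3 ... a_n) <= q(a_2 ... a_n).\<close>

definition successors :: "ltype \<Rightarrow> nat \<Rightarrow> letter set" where
  "successors t m = {e \<in> alph m. arrow m t e}"

lemma successors_T1: "successors T1 m = {(T2, 1)}"
  by (auto simp: successors_def alph_def)

lemma successors_T2: "successors T2 m = Pair T1 ` {1..m + 1} \<union> Pair T3 ` {1..m}"
  by (auto simp: successors_def alph_def)

lemma successors_T3: "successors T3 m = Pair T1 ` {1..m} \<union> Pair T3 ` {1..m - 1}"
  by (auto simp: successors_def alph_def)

lemma finite_successors: "finite (successors t m)"
  by (cases t) (simp_all add: successors_T1 successors_T2 successors_T3)

fun succ_count :: "ltype \<Rightarrow> ltype \<Rightarrow> nat \<Rightarrow> 'a::comm_semiring_1" where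
  "succ_count T1 T2 m = 1"
| "succ_count T2 T1 m = of_nat (m + 1)"
| "succ_count T2 T3 m = of_nat m"
| "succ_count T3 T1 m = of_nat m"
| "succ_count T3 T3 m = of_nat (m - 1)"
| "succ_count _ _ _ = 0"

lemma sum_fst_Pair_image: "(\<Sum>e\<in>Pair s ` A. g (fst e)) = of_nat (card A) * g s"
  by (simp add: sum.reindex inj_on_def)

lemma sum_successors:
  "(\<Sum>e\<in>successors t m. g (fst e)) =
     succ_count t T1 m * g T1 + succ_count t T2 m * g T2 + succ_count t T3 m * g T3"
proof (cases t)
  case T1
  then show ?thesis by (simp add: successors_T1)
next
  case T2
  show ?thesis
    unfolding T2 successors_T2 by (subst sum.union_disjoint) (auto simp: sum_fst_Pair_image)
next
  case T3
  show ?thesis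
    unfolding T3 successors_T3 by (subst sum.union_disjoint) (auto simp: sum_fst_Pair_image)
qed

fun transfer :: "ltype \<Rightarrow> nat list \<Rightarrow> (ltype \<Rightarrow> 'a::comm_semiring_1) \<Rightarrow> 'a" where
  "transfer t [] v = v t"
| "transfer t (m # r) v = succ_count t T1 m * transfer T1 r v
     + succ_count t T2 m * transfer T2 r v + succ_count t T3 m * transfer T3 r v"

lemma Xi_singleton: "Xi t [m] = (\<lambda>e. [e]) ` successors t m"
  by (auto simp: Xi_def successors_def length_Suc_conv)

lemma Cons_in_Xi_iff:
  assumes "r \<noteq> []"
  shows "e # w \<in> Xi t (m # r) \<longleftrightarrow> e \<in> successors t m \<and> w \<in> Xi (fst e) r"
proof -
  obtain n where "length r = Suc n"
    using assms by (cases r) auto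
  then show ?thesis
    by (simp add: Xi_def successors_def All_less_Suc2 conj_ac)
qed

lemma Xi_Cons:
  assumes "r \<noteq> []"
  shows "Xi t (m # r) = (\<lambda>(e, w). e # w) ` (SIGMA e:successors t m. Xi (fst e) r)"
proof (intro set_eqI iffI)
  fix w
  assume w: "w \<in> Xi t (m # r)"
  then obtain e w' where w_eq: "w = e # w'"
    by (cases w) (auto simp: Xi_def)
  with w have "(e, w') \<in> (SIGMA e:successors t m. Xi (fst e) r)"
    by (simp add: Cons_in_Xi_iff[OF assms])
  then show "w \<in> (\<lambda>(e, w). e # w) ` (SIGMA e:successors t m. Xi (fst e) r)"
    unfolding w_eq by (rule rev_image_eqI) simp
next
  fix w
  assume "w \<in> (\<lambda>(e, w). e # w) ` (SIGMA e:successors t m. Xi (fst e) r)"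
  then obtain e w' where "w = e # w'" "e \<in> successors t m" "w' \<in> Xi (fst e) r"
    by auto
  then show "w \<in> Xi t (m # r)"
    by (simp add: Cons_in_Xi_iff[OF assms])
qed

lemma finite_Xi: "finite (Xi t a)"
proof (rule finite_subset)
  show "Xi t a \<subseteq> {w. set w \<subseteq> \<Union> (alph ` set a) \<and> length w = length a}"
    by (force simp: Xi_def in_set_conv_nth)
  have "finite (alph m)" for m
    unfolding alph_def by (rule finite_subset[of _ "{T1, T2, T3} \<times> {..m + 1}"]) auto
  then show "finite {w. set w \<subseteq> \<Union> (alph ` set a) \<and> length w = length a}"
    by (intro finite_lists_length_eq) auto
qed

lemma sum_Xi_last:
  assumes "a \<noteq> []"
  shows "(\<Sum>w\<in>Xi t a. v (fst (last w))) = transfer t a v"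
  using assms
proof (induction a arbitrary: t rule: list_nonempty_induct)
  case (single m)
  show ?case
    by (simp add: Xi_singleton sum.reindex inj_on_def sum_successors)
next
  case (cons m r)
  have nonempty: "w \<noteq> []" if "w \<in> Xi s r" for s w
    using that cons.hyps by (auto simp: Xi_def)
  have "(\<Sum>w\<in>Xi t (m # r). v (fst (last w)))
      = (\<Sum>(e, w)\<in>(SIGMA e:successors t m. Xi (fst e) r). v (fst (last w)))"
    unfolding Xi_Cons[OF cons.hyps] using nonempty
    by (subst sum.reindex) (auto simp: inj_on_def intro!: sum.cong)
  also have "\<dots> = (\<Sum>e\<in>successors t m. \<Sum>w\<in>Xi (fst e) r. v (fst (last w)))"
    by (rule sum.Sigma[symmetric]) (simp_all add: finite_successors finite_Xi)
  also have "\<dots> = (\<Sum>e\<in>successors t m. transfer (fst e) r v)"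
    by (simp add: cons.IH)
  also have "\<dots> = transfer t (m # r) v"
    using sum_successors[where g = "\<lambda>s. transfer s r v"] by simp
  finally show ?case .
qed

lemma card_Xi_eq_transfer:
  assumes "a \<noteq> []"
  shows "of_nat (card (Xi t a)) = transfer t a (\<lambda>_. 1)"
  using sum_Xi_last[OF assms, where v = "\<lambda>_. 1"] by simp

lemma card_Xi_end_eq_sum:
  assumes "a \<noteq> []"
  shows "of_nat (card (Xi_end t a t')) = (\<Sum>w\<in>Xi t a. of_bool (fst (last w) = t'))"
proof -
  have "last w = w ! (length a - 1)" if "w \<in> Xi t a" for w
  proof -
    have "length w = length a"
      using that by (simp add: Xi_def)
    moreover have "w \<noteq> []"
      using calculation assms by auto
    ultimately show ?thesis
      by (simp add: last_conv_nth)
  qed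
  then have "Xi_end t a t' = Xi t a \<inter> {w. fst (last w) = t'}"
    by (auto simp: Xi_end_def)
  then show ?thesis
    by (simp add: finite_Xi)
qed

lemma card_Xi_end_eq_transfer:
  assumes "a \<noteq> []"
  shows "of_nat (card (Xi_end t a t')) = transfer t a (\<lambda>s. of_bool (s = t'))"
  unfolding card_Xi_end_eq_sum[OF assms] by (rule sum_Xi_last[OF assms])

lemma card_Xi_end_T2_T3:
  assumes "a \<noteq> []"
  shows "of_nat (card (Xi_end t a T2)) + of_nat (card (Xi_end t a T3))
    = transfer t a (\<lambda>s. of_bool (s \<noteq> T1))"
proof -
  have split_not_T1: "of_bool (s = T2) + of_bool (s = T3) = (of_bool (s \<noteq> T1) :: 'a)" for s
    by (cases s) simp_all
  show ?thesis
    unfolding card_Xi_end_eq_sum[OF assms] sum.distrib[symmetric] split_not_T1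
    by (rule sum_Xi_last[OF assms])
qed

definition continuant_step :: "nat \<times> nat \<Rightarrow> nat \<Rightarrow> nat \<times> nat" where
  "continuant_step = (\<lambda>(p, q) x. (q, x * q + p))"

lemma qn_eq_foldl: "qn a = snd (foldl continuant_step (0, 1) a)"
  by (simp add: qn_def continuant_step_def)

lemma foldl_continuant_step:
  "foldl continuant_step (p, q) a =
    (p * fst (foldl continuant_step (1, 0) a) + q * fst (foldl continuant_step (0, 1) a),
     p * snd (foldl continuant_step (1, 0) a) + q * snd (foldl continuant_step (0, 1) a))"
proof (induction a arbitrary: p q)
  case Nil
  then show ?case by simp
next
  case (Cons x r)
  show ?case
    using Cons.IH[of q "x * q + p"] Cons.IH[of 1 x]
    by (simp add: continuant_step_def algebra_simps)
qed

lemma qn_Nil [simp]: "qn [] = 1"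
  by (simp add: qn_def)

lemma qn_Cons_foldl: "qn (x # r) = x * qn r + snd (foldl continuant_step (1, 0) r)"
  using foldl_continuant_step[of 1 x r] by (simp add: qn_eq_foldl continuant_step_def)

lemma qn_singleton [simp]: "qn [x] = x"
  by (simp add: qn_Cons_foldl)

lemma qn_Cons_Cons [simp]: "qn (x # y # r) = x * qn (y # r) + qn r"
proof -
  have "snd (foldl continuant_step (1, 0) (y # r)) = qn r"
    by (simp add: qn_eq_foldl continuant_step_def)
  then show ?thesis
    by (simp add: qn_Cons_foldl[of x])
qed

lemma qn_pos: "\<forall>x\<in>set a. 1 \<le> x \<Longrightarrow> 1 \<le> qn a"
  by (induction a rule: induct_list012) (auto simp: trans_le_add2)

lemma qn_le_qn_Cons: "1 \<le> x \<Longrightarrow> qn r \<le> qn (x # r)"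
  by (cases r) (auto simp: trans_le_add1)

lemma transfer_closed_form:
  fixes v :: "ltype \<Rightarrow> 'a::comm_ring_1"
  assumes v: "v T3 = v T2" and pos: "\<forall>x\<in>set a. 1 \<le> x"
  shows "transfer T1 a v + transfer T3 a v = (v T1 + v T2) * of_nat (qn a)"
    and "transfer T2 a v = (v T1 + v T2) * of_nat (qn a) - v T1 * (-1) ^ length a"
proof -
  have "transfer T1 a v + transfer T3 a v = (v T1 + v T2) * of_nat (qn a)
      \<and> transfer T2 a v = (v T1 + v T2) * of_nat (qn a) - v T1 * (-1) ^ length a"
    using pos
  proof (induction a rule: induct_list012)
    case 1
    then show ?case using v by simp
  next
    case (2 x)
    then obtain k where "x = Suc k"
      by (cases x) auto
    then show ?case using v by (simp add: algebra_simps)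
  next
    case (3 x y zs)
    then obtain k where x: "x = Suc k"
      by (cases x) auto
    let ?s = "v T1 + v T2" and ?\<epsilon> = "(-1) ^ length zs :: 'a"
    have step:
      "transfer T1 (x # y # zs) v = transfer T2 (y # zs) v"
      "transfer T2 (x # y # zs) v
         = (of_nat x + 1) * transfer T1 (y # zs) v + of_nat x * transfer T3 (y # zs) v"
      "transfer T3 (x # y # zs) v
         = of_nat x * transfer T1 (y # zs) v + of_nat k * transfer T3 (y # zs) v"
      by (simp_all del: transfer.simps add: x transfer.simps(2)[of _ "Suc k"])
    have IH: "transfer T2 zs v = ?s * of_nat (qn zs) - v T1 * ?\<epsilon>"
      "transfer T1 (y # zs) v + transfer T3 (y # zs) v = ?s * of_nat (qn (y # zs))"
      "transfer T2 (y # zs) v = ?s * of_nat (qn (y # zs)) + v T1 * ?\<epsilon>"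
      using 3 by (simp_all del: transfer.simps)
    have T1: "transfer T1 (y # zs) v = ?s * of_nat (qn zs) - v T1 * ?\<epsilon>"
      using IH(1) by simp
    have T3:
      "transfer T3 (y # zs) v = ?s * of_nat (qn (y # zs)) - ?s * of_nat (qn zs) + v T1 * ?\<epsilon>"
      using IH(2) unfolding T1 by (simp add: algebra_simps)
    note T2 = IH(3)
    show ?case
      unfolding step T1 T2 T3 by (simp add: x algebra_simps)
  qed
  then show "transfer T1 a v + transfer T3 a v = (v T1 + v T2) * of_nat (qn a)"
    and "transfer T2 a v = (v T1 + v T2) * of_nat (qn a) - v T1 * (-1) ^ length a"
    by simp_all
qed

lemma card_Xi_formulas:
  assumes a: "a = m # r" and "r \<noteq> []" and pos: "\<forall>x\<in>set a. 1 \<le> x"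
  defines "\<epsilon> \<equiv> (-1) ^ length a :: real"
  shows "real (card (Xi T1 a)) = 2 * real (qn r) + \<epsilon>"
    and "real (card (Xi T2 a)) = 2 * real (qn a) - \<epsilon>"
    and "real (card (Xi T3 a)) = 2 * real (qn a) - 2 * real (qn r) - \<epsilon>"
    and "real (card (Xi_end T2 a T1)) = real (qn a) - \<epsilon>"
    and "real (card (Xi_end T1 a T2)) + real (card (Xi_end T1 a T3)) = real (qn r)"
    and "real (card (Xi_end T2 a T2)) + real (card (Xi_end T2 a T3)) = real (qn a)"
    and "real (card (Xi_end T3 a T2)) + real (card (Xi_end T3 a T3))
      = real (qn a) - real (qn r)"
proof -
  have "a \<noteq> []"
    using a by simp
  note card = card_Xi_eq_transfer[OF this, where 'a = real]
    and card_end = card_Xi_end_eq_transfer[OF this, where 'a = real]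
    and card_T2_T3 = card_Xi_end_T2_T3[OF this, where 'a = real]
  have pos_r: "\<forall>x\<in>set r. 1 \<le> x"
    using pos a by simp
  have \<epsilon>_r: "(-1) ^ length r = - \<epsilon>"
    by (simp add: \<epsilon>_def a)
  have T1_a: "transfer T1 a v = transfer T2 r v" for v :: "ltype \<Rightarrow> real"
    by (simp add: a)
  note ones = transfer_closed_form[where v = "\<lambda>_. 1 :: real"]
  note to_T1 = transfer_closed_form[where v = "\<lambda>s. of_bool (s = T1) :: real"]
  note not_T1 = transfer_closed_form[where v = "\<lambda>s. of_bool (s \<noteq> T1) :: real"]
  show "real (card (Xi T1 a)) = 2 * real (qn r) + \<epsilon>"
    using card ones(2)[OF _ pos_r] T1_a \<epsilon>_r by simp
  show "real (card (Xi T2 a)) = 2 * real (qn a) - \<epsilon>"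
    using card ones(2)[OF _ pos] by (simp add: \<epsilon>_def)
  show "real (card (Xi T3 a)) = 2 * real (qn a) - 2 * real (qn r) - \<epsilon>"
    using card ones(1)[OF _ pos] ones(2)[OF _ pos_r] T1_a \<epsilon>_r by simp
  show "real (card (Xi_end T2 a T1)) = real (qn a) - \<epsilon>"
    using card_end to_T1(2)[OF _ pos] by (simp add: \<epsilon>_def)
  show "real (card (Xi_end T1 a T2)) + real (card (Xi_end T1 a T3)) = real (qn r)"
    using card_T2_T3 not_T1(2)[OF _ pos_r] T1_a by simp
  show "real (card (Xi_end T2 a T2)) + real (card (Xi_end T2 a T3)) = real (qn a)"
    using card_T2_T3 not_T1(2)[OF _ pos] by simp
  show "real (card (Xi_end T3 a T2)) + real (card (Xi_end T3 a T3))
      = real (qn a) - real (qn r)"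
    using card_T2_T3 not_T1(1)[OF _ pos] not_T1(2)[OF _ pos_r] T1_a by simp
qed

lemma sim_if_bounds:
  fixes L X Y C :: real
  assumes "0 < L" "L \<le> X" "X \<le> C * L" "L \<le> Y" "Y \<le> C * L"
  shows "sim C X Y"
proof -
  have "L \<le> C * L"
    using assms(2,3) by linarith
  with assms(1) have C: "1 \<le> C"
    by (simp add: mult_le_cancel_right1)
  then have "Y / C \<le> L"
    using assms(5) by (simp add: pos_divide_le_eq mult.commute)
  moreover have "C * L \<le> C * Y"
    using C assms(4) by simp
  ultimately show ?thesis
    using assms unfolding sim_def by linarith
qed

lemma minus_one_power_bounds: "-1 \<le> (-1::real) ^ n" "(-1::real) ^ n \<le> 1"
  by (simp_all add: minus_one_power_iff)

lemma qn_Cons_bounds: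
  assumes "r \<noteq> []" and pos: "\<forall>x\<in>set (m # r). 1 \<le> x"
  shows "real (qn (m # r)) = real m * real (qn r) + real (qn (tl r))"
    and "1 \<le> real (qn (tl r))"
    and "real (qn (tl r)) \<le> real (qn r)"
    and "real (qn r) \<le> real m * real (qn r)"
proof -
  obtain n s where r: "r = n # s"
    using assms(1) by (cases r) auto
  show "real (qn (m # r)) = real m * real (qn r) + real (qn (tl r))"
    by (simp add: r)
  show "1 \<le> real (qn (tl r))"
    using pos qn_pos[of s] by (simp add: r)
  show "real (qn (tl r)) \<le> real (qn r)"
    using pos qn_le_qn_Cons[of n s] by (simp add: r)
  show "real (qn r) \<le> real m * real (qn r)"
    using pos by (simp add: mult_le_cancel_right1)
qed

lemma sim_card_Xi_T1:
  assumes a: "a = m # r" and r: "r \<noteq> []" and pos: "\<forall>x\<in>set a. 1 \<le> x"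
  shows "sim 3 (card (Xi T1 a)) (real (qn a) / real (a ! 0))"
proof (rule sim_if_bounds[where L = "qn r"])
  note q = qn_Cons_bounds[OF r pos[unfolded a], folded a]
  have "real m * qn r \<le> qn a" "qn a \<le> 3 * (real m * qn r)"
    using q by linarith+
  moreover have "a ! 0 = m" "1 \<le> real m"
    using a pos by simp_all
  ultimately show "real (qn r) \<le> real (qn a) / real (a ! 0)"
    and "real (qn a) / real (a ! 0) \<le> 3 * real (qn r)"
    by (simp_all add: field_simps)
qed (use card_Xi_formulas(1)[OF a r pos] qn_Cons_bounds[OF r pos[unfolded a], folded a]
    minus_one_power_bounds[of "length a"] in linarith)+

lemma sim_card_Xi_T2:
  assumes a: "a = m # r" and r: "r \<noteq> []" and pos: "\<forall>x\<in>set a. 1 \<le> x"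
  shows "sim 3 (card (Xi T2 a)) (qn a)"
  by (intro sim_if_bounds[where L = "qn a"];
      use card_Xi_formulas(2)[OF a r pos] qn_Cons_bounds[OF r pos[unfolded a], folded a]
        minus_one_power_bounds[of "length a"] in linarith)

lemma sim_card_Xi_T3:
  assumes a: "a = m # r" and r: "r \<noteq> []" and pos: "\<forall>x\<in>set a. 1 \<le> x"
    and m: "2 \<le> m"
  shows "sim 3 (card (Xi T3 a)) (qn a)"
proof -
  have "2 * real (qn r) \<le> real m * real (qn r)"
    using m by (simp add: mult_right_mono)
  then show ?thesis
    by (intro sim_if_bounds[where L = "qn a"];
        use card_Xi_formulas(3)[OF a r pos] qn_Cons_bounds[OF r pos[unfolded a], folded a]
          minus_one_power_bounds[of "length a"] in linarith)
qed

lemma sim_card_Xi_T3_head_one: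
  assumes a: "a = 1 # n # s" and s: "s \<noteq> []" and pos: "\<forall>x\<in>set a. 1 \<le> x"
  shows "sim 3 (card (Xi T3 a)) (real (qn a) / real (a ! 1))"
proof (rule sim_if_bounds[where L = "qn s"])
  have pos': "\<forall>x\<in>set (n # s). 1 \<le> x"
    using a pos by simp
  note q = qn_Cons_bounds[OF s pos']
  have "real (qn a) = qn (n # s) + qn s"
    by (simp add: a)
  then have "real n * qn s \<le> qn a" "qn a \<le> 3 * (real n * qn s)"
    using q by linarith+
  moreover have "a ! 1 = n" "1 \<le> real n"
    using a pos by simp_all
  ultimately show "real (qn s) \<le> real (qn a) / real (a ! 1)"
    and "real (qn a) / real (a ! 1) \<le> 3 * real (qn s)"
    by (simp_all add: field_simps)
qed (use card_Xi_formulas(3)[OF a _ pos] qn_Cons_bounds[OF _ pos[unfolded a]]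
    minus_one_power_bounds[of "length a"] in \<open>simp_all add: a\<close>)

lemma sim_card_Xi_end_T2_T3:
  assumes a: "a = m # r" and r: "r \<noteq> []" and pos: "\<forall>x\<in>set a. 1 \<le> x"
  shows "sim 3 (real (card (Xi_end t a T2)) + real (card (Xi_end t a T3))) (card (Xi t a))"
proof -
  note card = card_Xi_formulas[OF a r pos] and q = qn_Cons_bounds[OF r pos[unfolded a], folded a]
  note \<epsilon> = minus_one_power_bounds[of "length a"]
  show ?thesis
  proof (cases t)
    case T1
    show ?thesis
      unfolding T1 by (intro sim_if_bounds[where L = "qn r"]; use card q \<epsilon> in linarith)
  next
    case T2
    show ?thesis
      unfolding T2 by (intro sim_if_bounds[where L = "qn a"]; use card q \<epsilon> in linarith)
  next
    case T3
    show ?thesis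
      unfolding T3
      by (intro sim_if_bounds[where L = "qn a - qn r"];
          use card q \<epsilon> in \<open>simp add: algebra_simps; linarith\<close>)
  qed
qed

lemma sim_card_Xi_end_T2_T1:
  assumes a: "a = m # r" and r: "r \<noteq> []" and pos: "\<forall>x\<in>set a. 1 \<le> x"
  shows "sim 3 (card (Xi_end T2 a T1)) (qn a)"
  by (intro sim_if_bounds[where L = "qn a - 1"];
      use card_Xi_formulas(4)[OF a r pos] qn_Cons_bounds[OF r pos[unfolded a], folded a]
        minus_one_power_bounds[of "length a"] in \<open>simp add: algebra_simps; linarith\<close>)

theorem lemma4p5:
  shows "\<exists>C::real. C \<ge> 1 \<and> (\<forall>a::nat list. length a \<ge> 3 \<longrightarrow> (\<forall>x \<in> set a. x \<ge> 1) \<longrightarrow>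
     sim C (card (Xi T1 a)) (qn a / a ! 0)
   \<and> sim C (card (Xi T2 a)) (qn a)
   \<and> (a ! 0 \<ge> 2 \<longrightarrow> sim C (card (Xi T3 a)) (qn a))
   \<and> (a ! 0 = 1 \<longrightarrow> sim C (card (Xi T3 a)) (qn a / a ! 1))
   \<and> (\<forall>t. sim C (real (card (Xi_end t a T2)) + real (card (Xi_end t a T3))) (card (Xi t a)))
   \<and> sim C (card (Xi_end T2 a T1)) (qn a))"
proof (intro exI[of _ 3] conjI allI impI)
  fix a :: "nat list"
  assume "length a \<ge> 3" and pos: "\<forall>x\<in>set a. x \<ge> 1"
  then obtain m n s where a: "a = m # n # s" and s: "s \<noteq> []"
    by (auto simp: numeral_3_eq_3 Suc_le_length_iff)
  then have r: "n # s \<noteq> []"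
    by simp
  show "sim 3 (card (Xi T1 a)) (qn a / a ! 0)"
    by (rule sim_card_Xi_T1[OF a r pos])
  show "sim 3 (card (Xi T2 a)) (qn a)"
    by (rule sim_card_Xi_T2[OF a r pos])
  show "sim 3 (card (Xi T3 a)) (qn a)" if "a ! 0 \<ge> 2"
    using that by (intro sim_card_Xi_T3[OF a r pos]) (simp add: a)
  show "sim 3 (card (Xi T3 a)) (qn a / a ! 1)" if "a ! 0 = 1"
    using that by (intro sim_card_Xi_T3_head_one[OF _ s pos]) (simp add: a)
  show "sim 3 (real (card (Xi_end t a T2)) + real (card (Xi_end t a T3))) (card (Xi t a))" for t
    by (rule sim_card_Xi_end_T2_T3[OF a r pos])
  show "sim 3 (card (Xi_end T2 a T1)) (qn a)"
    by (rule sim_card_Xi_end_T2_T1[OF a r pos])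
qed simp

end
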